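(* In the FHMA network described below, let $N_{\mathrm{opt}}$ be the integer number of sub-bands $N\ge1$ minimizing the mean local delay $D(N)$. Then $$N_{\mathrm{opt}}\in[\lfloor t_0\rfloor,\lceil t_0\rceil+2],\qquad t_0=\lambda c_d r_0^d\theta^{\delta}C(\delta)+\theta r_0^\alpha WN_0.$$
   Context: Model: transmitters form a homogeneous Poisson point process $\Phi$ of intensity $\lambda>0$ in $\mathbb{R}^d$; the typical receiver is at the origin and its desired transmitter $x_0\in\Phi$ is at distance $r_0>0$; probabilities are under the Palm distribution at $x_0$. Time is slotted. Path loss $\kappa r^{-\alpha}$ with $\alpha>d$, $\delta=d/\alpha\in(0,1)$. Power fading coefficients are i.i.d. exponential with mean $1$ over transmitters and slots, independent of everything. Unit power, always backlogged transmitters. Bandwidth $W$, noise power spectral density $N_r$, $N_0=N_r/\kappa$, SINR threshold $\theta>0$. $c_d$ is the volume of the unit ball in $\mathbb{R}^d$, $C(\delta)=\Gamma(1+\delta)\Gamma(1-\delta)=\frac{\pi\delta}{\sin(\pi\delta)}$. FHMA with $N$ sub-bands: each transmitter $x$ independently picks a sub-band $\mathcal{S}_k(x)$ uniformly from $\{1,\dots,N\}$ in each slot $k$; $\mathrm{SINR}_k=\frac{h_{k,x_0}r_0^{-\alpha}}{WN_0/N+\sum_{x\in\Phi\setminus\{x_0\}}h_{k,x}|x|^{-\alpha}\mathbf{1}(\mathcal{S}_k(x)=\mathcal{S}_k(x_0))}$; a slot is successful if $\mathrm{SINR}_k>\theta$; the local delay is the number of slots until the $N$-th successful slot and $D(N)$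 is its mean. (The mean equals $D(N)=N\exp\left(\frac{\lambda c_d r_0^d\theta^{\delta}C(\delta)}{(N-1)^{1-\delta}N^{\delta}}+\frac{\theta r_0^\alpha WN_0}{N}\right)$, with $D(1)=\infty$.) *)

theory Defs
  imports "HOL-Analysis.Analysis"
begin

definition unit_ball_vol :: "nat \<Rightarrow> real" where
  "unit_ball_vol d = pi powr (real d / 2) / Gamma (real d / 2 + 1)"

definition Cdelta :: "real \<Rightarrow> real" where
  "Cdelta \<delta> = Gamma (1 + \<delta>) * Gamma (1 - \<delta>)"

definition mean_delay ::
  "real \<Rightarrow> nat \<Rightarrow> real \<Rightarrow> real \<Rightarrow> real \<Rightarrow> real \<Rightarrow> real \<Rightarrow> nat \<Rightarrow> ereal" where
  "mean_delay lam d \<alpha> r0 \<theta> W N0 N =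
     (if N \<le> 1 then \<infinity> else
      (let \<delta> = real d / \<alpha> in
       ereal (real N * exp (lam * unit_ball_vol d * r0 ^ d * \<theta> powr \<delta> * Cdelta \<delta>
                 / ((real N - 1) powr (1 - \<delta>) * real N powr \<delta>)
               + \<theta> * r0 powr \<alpha> * W * N0 / real N))))"

end

theory Submission imports Defs begin

text \<open>Writing \<open>D(N) = exp (G N)\<close> with \<open>G x = ln x + A / p x + B / x\<close>, where \<open>p x\<close> is the weighted
  geometric mean of \<open>x - 1\<close> and \<open>x\<close>, so that \<open>x - 1 \<le> p x \<le> x\<close>, the derivative of \<open>G\<close> is squeezed
  between \<open>1/x - (A+B)/(x-1)\<^sup>2\<close> and \<open>(x - (A+B))/x\<^sup>2\<close>. Hence \<open>G\<close> decreases up to \<open>A + B\<close> and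
  increases from \<open>A + B + 2\<close> on, which pins an integer minimiser between \<open>\<lfloor>A+B\<rfloor>\<close> and \<open>\<lceil>A+B\<rceil> + 2\<close>.\<close>

definition weighted_geomean :: "real \<Rightarrow> real \<Rightarrow> real" where
  "weighted_geomean \<delta> x = (x - 1) powr (1 - \<delta>) * x powr \<delta>"

lemma weighted_geomean_bounds:
  fixes x \<delta> :: real assumes "x > 1" "0 \<le> \<delta>" "\<delta> \<le> 1"
  shows "x - 1 \<le> weighted_geomean \<delta> x" "weighted_geomean \<delta> x \<le> x"
proof -
  have "x - 1 = (x-1) powr (1-\<delta>) * (x-1) powr \<delta>"
    using assms by (simp add: powr_add[symmetric])
  also have "\<dots> \<le> weighted_geomean \<delta> x"
    unfolding weighted_geomean_def using assms by (intro mult_left_mono powr_mono2) auto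
  finally show "x - 1 \<le> weighted_geomean \<delta> x" .
  have "weighted_geomean \<delta> x \<le> x powr (1-\<delta>) * x powr \<delta>"
    unfolding weighted_geomean_def using assms by (intro mult_right_mono powr_mono2) auto
  also have "\<dots> = x"
    using assms by (simp add: powr_add[symmetric])
  finally show "weighted_geomean \<delta> x \<le> x" .
qed

lemma weighted_geomean_pos: "x > 1 \<Longrightarrow> weighted_geomean \<delta> x > 0"
  by (simp add: weighted_geomean_def)

lemma has_real_derivative_weighted_geomean:
  fixes x \<delta> :: real assumes "x > 1"
  shows "(weighted_geomean \<delta> has_real_derivative
           weighted_geomean \<delta> x * ((1-\<delta>)/(x-1) + \<delta>/x)) (at x)"
proof -
  have "(x-1) powr (1-\<delta> - real 1) = (x-1) powr (1-\<delta>) / (x-1)"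
    by (simp only: powr_diff of_nat_1) (use assms in simp)
  with assms have left: "((\<lambda>x. (x-1) powr (1-\<delta>)) has_real_derivative
      (1-\<delta>) * ((x-1) powr (1-\<delta>) / (x-1))) (at x)"
    using DERIV_fun_powr[OF DERIV_diff[OF DERIV_ident DERIV_const], of x 1 "1-\<delta>"] by simp
  have "x powr (\<delta> - real 1) = x powr \<delta> / x"
    by (simp only: powr_diff of_nat_1) (use assms in simp)
  with assms have right: "((\<lambda>x. x powr \<delta>) has_real_derivative \<delta> * (x powr \<delta> / x)) (at x)"
    using DERIV_fun_powr[OF DERIV_ident, of x \<delta>] by simp
  show ?thesis
    using DERIV_mult[OF left right] unfolding weighted_geomean_def[abs_def]
    by (simp add: algebra_simps)
qed

definition log_delay :: "real \<Rightarrow> real \<Rightarrow> real \<Rightarrow> real \<Rightarrow> real" where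
  "log_delay \<delta> A B x = ln x + A / weighted_geomean \<delta> x + B / x"

lemma has_real_derivative_log_delay:
  fixes x \<delta> A B :: real assumes "x > 1"
  shows "(log_delay \<delta> A B has_real_derivative
     1/x - A * ((1-\<delta>)/(x-1) + \<delta>/x) / weighted_geomean \<delta> x - B / x\<^sup>2) (at x)"
proof -
  let ?p = "weighted_geomean \<delta> x"
  have p: "?p > 0" using assms by (rule weighted_geomean_pos)
  have "(log_delay \<delta> A B has_real_derivative
          1/x - A * (?p * ((1-\<delta>)/(x-1) + \<delta>/x)) / ?p\<^sup>2 - B / x\<^sup>2) (at x)"
    unfolding log_delay_def using assms p
    by (auto intro!: derivative_eq_intros has_real_derivative_weighted_geomean
             simp: power2_eq_square field_simps)
  then show ?thesis using p by (simp add: power2_eq_square)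
qed

lemma log_delay_deriv_upper:
  fixes x \<delta> A B :: real assumes "x > 1" "0 \<le> \<delta>" "\<delta> \<le> 1" "A \<ge> 0"
  shows "1/x - A * ((1-\<delta>)/(x-1) + \<delta>/x) / weighted_geomean \<delta> x - B / x\<^sup>2 \<le> (x - (A+B)) / x\<^sup>2"
proof -
  let ?p = "weighted_geomean \<delta> x"
  have p: "0 < ?p" "?p \<le> x" using weighted_geomean_bounds[OF assms(1-3)] assms(1) weighted_geomean_pos by auto
  have "(1-\<delta>)/x \<le> (1-\<delta>)/(x-1)" using assms by (intro divide_left_mono) auto
  then have "1/x \<le> (1-\<delta>)/(x-1) + \<delta>/x" by (simp add: diff_divide_distrib)
  moreover have "1/x \<le> 1/?p" using p by (intro divide_left_mono) auto
  ultimately have "A * (1/x) * (1/x) \<le> A * ((1-\<delta>)/(x-1) + \<delta>/x) * (1/?p)"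
    using assms by (intro mult_mono mult_left_mono) auto
  moreover have "1/x - A * (1/x) * (1/x) - B/x\<^sup>2 = (x - (A+B)) / x\<^sup>2"
    using assms(1) by (simp add: power2_eq_square field_simps)
  ultimately show ?thesis by simp
qed

lemma log_delay_deriv_lower:
  fixes x \<delta> A B :: real assumes "x > 1" "0 \<le> \<delta>" "\<delta> \<le> 1" "A \<ge> 0" "B \<ge> 0"
  shows "1/x - (A+B) / (x-1)\<^sup>2 \<le> 1/x - A * ((1-\<delta>)/(x-1) + \<delta>/x) / weighted_geomean \<delta> x - B / x\<^sup>2"
proof -
  let ?p = "weighted_geomean \<delta> x"
  have p: "0 < ?p" "x - 1 \<le> ?p" using weighted_geomean_bounds[OF assms(1-3)] assms(1) weighted_geomean_pos by auto
  have "\<delta>/x \<le> \<delta>/(x-1)" using assms by (intro divide_left_mono) auto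
  then have "(1-\<delta>)/(x-1) + \<delta>/x \<le> 1/(x-1)" by (simp add: diff_divide_distrib)
  moreover have "1/?p \<le> 1/(x-1)" using p assms(1) by (intro divide_left_mono) auto
  ultimately have "A * ((1-\<delta>)/(x-1) + \<delta>/x) * (1/?p) \<le> A * (1/(x-1)) * (1/(x-1))"
    using assms p by (intro mult_mono mult_left_mono) auto
  moreover have "B / x\<^sup>2 \<le> B / (x-1)\<^sup>2"
    using assms by (intro divide_left_mono power_mono) auto
  moreover have "A * (1/(x-1)) * (1/(x-1)) + B / (x-1)\<^sup>2 = (A+B) / (x-1)\<^sup>2"
    by (simp add: power2_eq_square add_divide_distrib)
  ultimately show ?thesis by simp
qed

lemma continuous_on_log_delay: "1 < a \<Longrightarrow> continuous_on {a..b} (log_delay \<delta> A B)"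
  by (intro continuous_at_imp_continuous_on ballI DERIV_isCont[OF has_real_derivative_log_delay]) auto

lemma log_delay_strict_decreasing:
  fixes a b \<delta> A B :: real
  assumes "1 < a" "a < b" "b \<le> A + B" "0 \<le> \<delta>" "\<delta> \<le> 1" "A \<ge> 0"
  shows "log_delay \<delta> A B b < log_delay \<delta> A B a"
proof (rule DERIV_neg_imp_decreasing_open[OF \<open>a < b\<close> _ continuous_on_log_delay[OF \<open>1 < a\<close>]])
  fix x assume x: "a < x" "x < b"
  then have x1: "x > 1" using assms by linarith
  have "(x - (A+B)) / x\<^sup>2 < 0" using x assms by (intro divide_neg_pos) auto
  then show "\<exists>y. (log_delay \<delta> A B has_real_derivative y) (at x) \<and> y < 0"
    using has_real_derivative_log_delay[OF x1, of \<delta> A B] log_delay_deriv_upper[OF x1 assms(4-6), of B]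
    by fastforce
qed

lemma log_delay_strict_increasing:
  fixes a b \<delta> A B :: real
  assumes "A + B + 2 \<le> a" "a < b" "0 \<le> \<delta>" "\<delta> \<le> 1" "A \<ge> 0" "B \<ge> 0"
  shows "log_delay \<delta> A B a < log_delay \<delta> A B b"
proof (rule DERIV_pos_imp_increasing_open[OF \<open>a < b\<close> _ continuous_on_log_delay])
  show "1 < a" using assms by linarith
  fix x assume x: "a < x" "x < b"
  then have x1: "x > 1" using assms by linarith
  have "(A+B) * x \<le> (x - 2) * x" using x assms by (intro mult_right_mono) auto
  then have "(A+B) * x < (x-1)\<^sup>2" by (simp add: power2_eq_square algebra_simps)
  then have "0 < 1/x - (A+B) / (x-1)\<^sup>2" using x1 by (simp add: field_simps)
  then show "\<exists>y. (log_delay \<delta> A B has_real_derivative y) (at x) \<and> y > 0"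
    using has_real_derivative_log_delay[OF x1, of \<delta> A B] log_delay_deriv_lower[OF x1 assms(3-6)]
    by fastforce
qed

lemma log_delay_nat_argmin_bounds:
  fixes \<delta> A B :: real and n :: nat
  assumes "0 \<le> \<delta>" "\<delta> \<le> 1" "A \<ge> 0" "B \<ge> 0" "n \<ge> 2"
    and argmin: "\<And>m. m \<ge> 2 \<Longrightarrow> log_delay \<delta> A B (real n) \<le> log_delay \<delta> A B (real m)"
  shows "of_int \<lfloor>A + B\<rfloor> \<le> real n" "real n \<le> of_int \<lceil>A + B\<rceil> + 2"
proof -
  show "of_int \<lfloor>A + B\<rfloor> \<le> real n"
  proof (rule ccontr)
    assume "\<not> ?thesis"
    then have "int n + 1 \<le> \<lfloor>A + B\<rfloor>" by linarith
    then have "real n + 1 \<le> A + B" by (simp add: le_floor_iff)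
    then have "log_delay \<delta> A B (real (n + 1)) < log_delay \<delta> A B (real n)"
      using assms by (auto intro: log_delay_strict_decreasing)
    with argmin[of "n + 1"] \<open>n \<ge> 2\<close> show False by simp
  qed
  show "real n \<le> of_int \<lceil>A + B\<rceil> + 2"
  proof (rule ccontr)
    assume "\<not> ?thesis"
    then have "\<lceil>A + B\<rceil> \<le> int n - 3" by linarith
    then have "A + B \<le> real n - 3" by (simp add: ceiling_le_iff)
    then have "A + B + 2 \<le> real (n - 1)" using \<open>n \<ge> 2\<close> by (simp add: of_nat_diff)
    then have "log_delay \<delta> A B (real (n - 1)) < log_delay \<delta> A B (real n)"
      using assms by (auto intro: log_delay_strict_increasing)
    moreover have "n - 1 \<ge> 2" using \<open>A + B + 2 \<le> real (n - 1)\<close> assms by linarith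
    ultimately show False using argmin[of "n - 1"] by simp
  qed
qed

lemma mean_delay_eq_exp_log_delay:
  assumes "N \<ge> 2"
  shows "mean_delay lam d \<alpha> r0 \<theta> W N0 N = ereal (exp (log_delay (real d / \<alpha>)
           (lam * unit_ball_vol d * r0 ^ d * \<theta> powr (real d / \<alpha>) * Cdelta (real d / \<alpha>))
           (\<theta> * r0 powr \<alpha> * W * N0) (real N)))"
  using assms by (simp add: mean_delay_def log_delay_def weighted_geomean_def exp_add Let_def)

lemma unit_ball_vol_pos: "unit_ball_vol d > 0"
  unfolding unit_ball_vol_def by (intro divide_pos_pos) auto

lemma Cdelta_pos: "0 < \<delta> \<Longrightarrow> \<delta> < 1 \<Longrightarrow> Cdelta \<delta> > 0"
  unfolding Cdelta_def by (intro mult_pos_pos Gamma_real_pos) auto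

theorem theorem5:
  fixes lam \<alpha> r0 \<theta> W N0 :: real and d Nopt :: nat
  assumes "lam > 0" and "d \<ge> 1" and "\<alpha> > real d" and "r0 > 0" and "\<theta> > 0"
    and "W > 0" and "N0 > 0"
    and "Nopt \<ge> 1"
    and "\<forall>M\<ge>1. mean_delay lam d \<alpha> r0 \<theta> W N0 Nopt \<le> mean_delay lam d \<alpha> r0 \<theta> W N0 M"
  shows "(let t0 = lam * unit_ball_vol d * r0 ^ d * \<theta> powr (real d / \<alpha>) * Cdelta (real d / \<alpha>)
                  + \<theta> * r0 powr \<alpha> * W * N0
         in of_int \<lfloor>t0\<rfloor> \<le> real Nopt \<and> real Nopt \<le> of_int \<lceil>t0\<rceil> + 2)"
proof -
  define \<delta> where "\<delta> = real d / \<alpha>"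
  define A where "A = lam * unit_ball_vol d * r0 ^ d * \<theta> powr \<delta> * Cdelta \<delta>"
  define B where "B = \<theta> * r0 powr \<alpha> * W * N0"
  note D = mean_delay_eq_exp_log_delay[of _ lam d \<alpha> r0 \<theta> W N0, folded \<delta>_def, folded A_def B_def]
  have \<delta>: "0 < \<delta>" "\<delta> < 1" using assms(2,3) by (simp_all add: \<delta>_def)
  have "A > 0" unfolding A_def using assms \<delta> unit_ball_vol_pos Cdelta_pos by simp
  have "B > 0" unfolding B_def using assms by simp
  have "Nopt \<noteq> 1"
  proof
    assume "Nopt = 1"
    moreover have "mean_delay lam d \<alpha> r0 \<theta> W N0 Nopt \<le> mean_delay lam d \<alpha> r0 \<theta> W N0 2"
      using assms(9) by simp
    ultimately show False using D[of 2] by (simp add: mean_delay_def)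
  qed
  then have "Nopt \<ge> 2" using assms(8) by linarith
  have "log_delay \<delta> A B (real Nopt) \<le> log_delay \<delta> A B (real M)" if "M \<ge> 2" for M
  proof -
    have "mean_delay lam d \<alpha> r0 \<theta> W N0 Nopt \<le> mean_delay lam d \<alpha> r0 \<theta> W N0 M"
      using assms(9) that by simp
    then show ?thesis by (simp add: D that \<open>Nopt \<ge> 2\<close>)
  qed
  from log_delay_nat_argmin_bounds[OF _ _ _ _ \<open>Nopt \<ge> 2\<close> this] \<delta> \<open>A > 0\<close> \<open>B > 0\<close>
  show ?thesis unfolding Let_def by (simp add: A_def B_def \<delta>_def)
qed

end
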